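(* Let $k\ge2$, $a_1\in A_1$ and $b_1\in Ab$. Then the map $a\mapsto a_1$, $b\mapsto b_1$ extends to an automorphism of the group $BS(1,k)$.
   Context: $BS(1,k)=\langle a,b\mid b^{-1}ab=a^k\rangle$, identified with $\mathbb{Z}[1/k]\rtimes\mathbb{Z}$ (pairs $(y,m)$, $y\in\mathbb{Z}[1/k]=\{zk^i:z,i\in\mathbb{Z}\}$, $m\in\mathbb{Z}$, product $(y_1,m_1)(y_2,m_2)=(y_1+y_2k^{-m_1},m_1+m_2)$), with $a=(1,0)$, $b=(0,1)$. $A=\{(y,0): y\in\mathbb{Z}[1/k]\}$ is the normal closure of $a$; for $u=(y,0)\in A$ and $s\in\mathbb{Z}[1/k]$ write $u^s=(ys,0)$, so $A=\{a^y:y\in\mathbb{Z}[1/k]\}$. $A_1=\{a^y: y \text{ a unit of }\mathbb{Z}[1/k]\}$ and $Ab=\{a^yb: y\in\mathbb{Z}[1/k]\}$. *)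

theory Defs
  imports Complex_Main "HOL-Algebra.Group" "HOL-Algebra.Coset"
begin

text \<open>The ring Z[1/k] as a subset of the rationals: all z * k^i with z, i integers.\<close>
definition Zinv :: "int \<Rightarrow> rat set" where
  "Zinv k = {of_int z * (of_int k) powi i | z i. True}"

definition Zinv_units :: "int \<Rightarrow> rat set" where
  "Zinv_units k = {y \<in> Zinv k. \<exists>w \<in> Zinv k. y * w = 1}"

text \<open>BS(1,k) as Z[1/k] semidirect Z, pairs (y,m), product
  (y1,m1)(y2,m2) = (y1 + y2 k^(-m1), m1 + m2).\<close>
definition BS :: "int \<Rightarrow> (rat \<times> int) monoid" where
  "BS k = \<lparr> carrier = {(y, m). y \<in> Zinv k},
            mult = (\<lambda>(y1, m1) (y2, m2). (y1 + y2 * (of_int k) powi (- m1), m1 + m2)),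
            one = (0, 0) \<rparr>"

definition gen_a :: "rat \<times> int" where "gen_a = (1, 0)"
definition gen_b :: "rat \<times> int" where "gen_b = (0, 1)"

definition apow :: "rat \<Rightarrow> rat \<times> int" where "apow y = (y, 0)"

definition A1 :: "int \<Rightarrow> (rat \<times> int) set" where
  "A1 k = {apow y | y. y \<in> Zinv_units k}"

definition Ab :: "int \<Rightarrow> (rat \<times> int) set" where
  "Ab k = {apow y \<otimes>\<^bsub>BS k\<^esub> gen_b | y. y \<in> Zinv k}"

end

theory Submission
  imports Defs
begin

text \<open>Write \<open>a\<^sub>1 = (u, 0)\<close> and \<open>b\<^sub>1 = (c, 1)\<close>. Then \<open>b\<^sub>1^m = (c g(m), m)\<close> with
  \<open>g(m) = k (1 - k^(-m)) / (k - 1)\<close>, so the extension must be the affine map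
  \<open>(y, m) \<mapsto> (u y + c g(m), m)\<close>. It is a homomorphism because \<open>g\<close> is a 1-cocycle for the action
  of \<open>\<int>\<close> on \<open>\<int>[1/k]\<close> by multiplication with \<open>k^(-1)\<close>: \<open>g(m + n) = g(m) + k^(-m) g(n)\<close>,
  and \<open>g\<close> takes values in \<open>\<int>[1/k]\<close> since \<open>g(m + 1) - g(m) = k^(-m)\<close>. These maps compose like the affine
  group of \<open>\<int>[1/k]\<close>, so the map has an inverse of the same form when \<open>u\<close> is a unit.\<close>

lemma Zinv_of_int_mult_power_int: "of_int z * of_int k powi i \<in> Zinv k"
  unfolding Zinv_def by blast

lemma Zinv_power_int: "of_int k powi i \<in> Zinv k"
  using Zinv_of_int_mult_power_int[of 1 k i] by simp

lemma power_int_nonneg_eq_of_int_power: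
  "i \<ge> 0 \<Longrightarrow> (of_int k :: 'a :: division_ring) powi i = of_int (k ^ nat i)"
  by (simp add: power_int_def)

lemma Zinv_add:
  assumes "k \<noteq> 0" and "x \<in> Zinv k" and "y \<in> Zinv k"
  shows "x + y \<in> Zinv k"
proof -
  obtain z1 i1 z2 i2 where x: "x = of_int z1 * of_int k powi i1"
    and y: "y = of_int z2 * of_int k powi i2"
    using assms(2,3) unfolding Zinv_def by blast
  define j where "j = min i1 i2"
  have split: "(of_int k :: rat) powi i = of_int (k ^ nat (i - j)) * of_int k powi j"
    if "i \<ge> j" for i
    using assms(1) that power_int_add[of "of_int k :: rat" "i - j" j]
    by (simp add: power_int_nonneg_eq_of_int_power)
  have "x + y = of_int (z1 * k ^ nat (i1 - j) + z2 * k ^ nat (i2 - j)) * of_int k powi j"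
    unfolding x y using split[of i1] split[of i2] by (simp add: j_def algebra_simps)
  then show ?thesis
    using Zinv_of_int_mult_power_int by metis
qed

lemma Zinv_mult:
  assumes "k \<noteq> 0" and "x \<in> Zinv k" and "y \<in> Zinv k"
  shows "x * y \<in> Zinv k"
proof -
  obtain z1 i1 z2 i2 where x: "x = of_int z1 * of_int k powi i1"
    and y: "y = of_int z2 * of_int k powi i2"
    using assms(2,3) unfolding Zinv_def by blast
  have "x * y = of_int (z1 * z2) * of_int k powi (i1 + i2)"
    unfolding x y using assms(1) by (simp add: power_int_add algebra_simps)
  then show ?thesis
    using Zinv_of_int_mult_power_int by metis
qed

lemma Zinv_uminus:
  assumes "x \<in> Zinv k"
  shows "- x \<in> Zinv k"
proof -
  obtain z i where "x = of_int z * of_int k powi i"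
    using assms unfolding Zinv_def by blast
  then have "- x = of_int (- z) * of_int k powi i"
    by simp
  then show ?thesis
    using Zinv_of_int_mult_power_int by metis
qed

lemma Zinv_diff:
  "k \<noteq> 0 \<Longrightarrow> x \<in> Zinv k \<Longrightarrow> y \<in> Zinv k \<Longrightarrow> x - y \<in> Zinv k"
  using Zinv_add[of k x "- y"] Zinv_uminus[of y k] by simp

text \<open>For \<open>m \<ge> 0\<close> this is the geometric sum \<open>\<Sum>j<m. k^(-j)\<close>.\<close>

definition geom_cocycle :: "int \<Rightarrow> int \<Rightarrow> rat" where
  "geom_cocycle k m = of_int k * (1 - of_int k powi (- m)) / (of_int k - 1)"

lemma geom_cocycle_0 [simp]: "geom_cocycle k 0 = 0"
  by (simp add: geom_cocycle_def)

lemma geom_cocycle_1: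
  assumes "k \<noteq> 0" and "k \<noteq> 1"
  shows "geom_cocycle k 1 = 1"
  using assms by (simp add: geom_cocycle_def power_int_minus field_simps)

lemma geom_cocycle_add:
  assumes "k \<noteq> 0"
  shows "geom_cocycle k (m1 + m2) = geom_cocycle k m1 + of_int k powi (- m1) * geom_cocycle k m2"
proof -
  have "(of_int k :: rat) powi (- (m1 + m2)) = of_int k powi (- m1) * of_int k powi (- m2)"
    using assms power_int_add[of "of_int k :: rat" "- m1" "- m2"] by simp
  then show ?thesis
    unfolding geom_cocycle_def by (simp add: add_divide_distrib [symmetric] algebra_simps)
qed

lemma geom_cocycle_in_Zinv:
  assumes "k \<noteq> 0" and "k \<noteq> 1"
  shows "geom_cocycle k m \<in> Zinv k"
proof (induction m rule: int_induct[where k = 0])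
  case base
  show ?case
    using Zinv_of_int_mult_power_int[of 0 k 0] by simp
next
  case (step1 i)
  have "geom_cocycle k (i + 1) = geom_cocycle k i + of_int k powi (- i)"
    using geom_cocycle_add[OF assms(1)] geom_cocycle_1[OF assms] by simp
  then show ?case
    using Zinv_add[OF assms(1) step1.IH Zinv_power_int] by simp
next
  case (step2 i)
  have "geom_cocycle k (i - 1) = geom_cocycle k i - of_int k powi (1 - i)"
    using geom_cocycle_add[OF assms(1), of "i - 1" 1] geom_cocycle_1[OF assms] by simp
  then show ?case
    using Zinv_diff[OF assms(1) step2.IH Zinv_power_int] by simp
qed

definition bs_affine :: "int \<Rightarrow> rat \<Rightarrow> rat \<Rightarrow> rat \<times> int \<Rightarrow> rat \<times> int" where
  "bs_affine k u c = (\<lambda>(y, m). (u * y + c * geom_cocycle k m, m))"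

lemma bs_affine_apply [simp]: "bs_affine k u c (y, m) = (u * y + c * geom_cocycle k m, m)"
  by (simp add: bs_affine_def)

lemma bs_affine_comp:
  "bs_affine k u c (bs_affine k u' c' x) = bs_affine k (u * u') (u * c' + c) x"
  by (cases x) (simp add: algebra_simps)

lemma bs_affine_id: "bs_affine k 1 0 x = x"
  by (cases x) simp

lemma bs_affine_gen_a: "bs_affine k u c gen_a = (u, 0)"
  by (simp add: gen_a_def)

lemma bs_affine_gen_b: "k \<noteq> 0 \<Longrightarrow> k \<noteq> 1 \<Longrightarrow> bs_affine k u c gen_b = (c, 1)"
  by (simp add: gen_b_def geom_cocycle_1)

lemma bs_affine_hom:
  assumes "k \<noteq> 0" and "k \<noteq> 1" and "u \<in> Zinv k" and "c \<in> Zinv k"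
  shows "bs_affine k u c \<in> hom (BS k) (BS k)"
proof (rule homI)
  fix x
  assume "x \<in> carrier (BS k)"
  then obtain y m where "x = (y, m)" and "y \<in> Zinv k"
    by (auto simp: BS_def)
  then show "bs_affine k u c x \<in> carrier (BS k)"
    using assms Zinv_add Zinv_mult geom_cocycle_in_Zinv by (simp add: BS_def)
next
  fix x x' :: "rat \<times> int"
  obtain y m y' m' where x: "x = (y, m)" and x': "x' = (y', m')"
    by fastforce
  have "geom_cocycle k (m + m') = geom_cocycle k m + of_int k powi (- m) * geom_cocycle k m'"
    using geom_cocycle_add[OF assms(1)] .
  then show "bs_affine k u c (x \<otimes>\<^bsub>BS k\<^esub> x') = bs_affine k u c x \<otimes>\<^bsub>BS k\<^esub> bs_affine k u c x'"
    unfolding x x' by (simp add: BS_def algebra_simps)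
qed

lemma bs_affine_iso:
  assumes "k \<noteq> 0" and "k \<noteq> 1" and "u \<in> Zinv_units k" and "c \<in> Zinv k"
  shows "bs_affine k u c \<in> iso (BS k) (BS k)"
proof -
  obtain w where w: "w \<in> Zinv k" and uw: "u * w = 1"
    using assms(3) unfolding Zinv_units_def by blast
  have u: "u \<in> Zinv k"
    using assms(3) unfolding Zinv_units_def by blast
  have c': "- (w * c) \<in> Zinv k"
    using Zinv_uminus Zinv_mult[OF assms(1) w assms(4)] by blast
  have hom: "bs_affine k u c \<in> hom (BS k) (BS k)"
    using bs_affine_hom[OF assms(1,2) u assms(4)] .
  have hom': "bs_affine k w (- (w * c)) \<in> hom (BS k) (BS k)"
    using bs_affine_hom[OF assms(1,2) w c'] .
  have "bij_betw (bs_affine k u c) (carrier (BS k)) (carrier (BS k))"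
  proof (rule bij_betwI[where g = "bs_affine k w (- (w * c))"])
    show "bs_affine k u c \<in> carrier (BS k) \<rightarrow> carrier (BS k)"
      using hom by (simp add: hom_def)
    show "bs_affine k w (- (w * c)) \<in> carrier (BS k) \<rightarrow> carrier (BS k)"
      using hom' by (simp add: hom_def)
  qed (simp_all add: bs_affine_comp bs_affine_id uw mult.commute[of w u] algebra_simps)
  with hom show ?thesis
    unfolding iso_def by blast
qed

theorem lemma4p1:
  fixes k :: int and a1 b1 :: "rat \<times> int"
  assumes "k \<ge> 2" and "a1 \<in> A1 k" and "b1 \<in> Ab k"
  shows "\<exists>\<phi>. \<phi> \<in> iso (BS k) (BS k) \<and> \<phi> gen_a = a1 \<and> \<phi> gen_b = b1"
proof -
  have k: "k \<noteq> 0" "k \<noteq> 1"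
    using assms(1) by auto
  obtain u where u: "u \<in> Zinv_units k" and a1: "a1 = (u, 0)"
    using assms(2) unfolding A1_def apow_def by blast
  obtain c where c: "c \<in> Zinv k" and b1: "b1 = (c, 1)"
    using assms(3) unfolding Ab_def apow_def gen_b_def BS_def by auto
  show ?thesis
    using bs_affine_iso[OF k u c] bs_affine_gen_a bs_affine_gen_b[OF k] a1 b1 by blast
qed

end
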